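(* Let $(\mathcal X,\rho)$ be a non-empty Polish metric space with Borel $\sigma$-field $\mathfrak B(\mathcal X)$, and let $\mathcal Y\in\mathfrak B(\mathcal X)$ satisfy the entropy condition $$c_{x,0}\,s^{-\gamma}\le \log \mathcal N_{\mathcal X}(s,\mathcal Y,\rho)\le c_{x,1}\,s^{-\gamma}\qquad\text{for all } s\in(0,s_0),$$ for some constants $s_0>0$, $0<c_{x,0}<c_{x,1}$, $\gamma>0$. Fix $C>0$ and $\beta\in(0,1]$, and let $\mathcal G=\mathcal G_{\beta,C}$ be the class of all Borel measurable $g:\mathcal X\to\mathbb R$ with $\sup_{y\in\mathcal Y}|g(y)|\le C$ and $|g(y)-g(z)|\le C\rho(y,z)^\beta$ for all $y,z\in\mathcal Y$. For each $n$, observe $(X_1,Y_1),\dots,(X_n,Y_n)$ with $Y_j=g(X_j)+\varepsilon_j$, where $g\in\mathcal G$, the pairs $(X_1,\varepsilon_1),\dots,(X_n,\varepsilon_n)$ are i.i.d., the $X_j$ take values in $\mathcal X$ with law $P_{X,n}$ on $\mathfrak B(\mathcal X)$ satisfying $P_{X,n}(\mathcal Y)=1$, the $\varepsilon_j$ are real-valued, and $E(\varepsilon_1\mid X_1)=0$ and $\operatorname{var}(\varepsilon_1\mid X_1)\le c_v$ almost surely, for a constant $c_v$. Define, with $K=1_{[0,1)}$ and $K_h:=K(\cdot/h)$, $$\hat A(x)=\frac1n\sum_{j=1}^n Y_jK_h(\rho(x,X_j)),\quad \hat B(x)=\frac1n\sum_{j=1}^n K_h(\rho(x,X_j)),\quad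 \hat g(x)=\begin{cases}\hat A(x)/\hat B(x),&\hat B(x)>\delta_n,\\ 0,&\text{otherwise},\end{cases}$$ where $\delta_n=n^{-\eta}$ with $\eta\in(0,1/2)$ and $h=\{d\log n\}^{-1/\gamma}$ with $d\in(0,\eta\, c_{x,1}^{-1}4^{-\gamma})$. Then for any sequence $\{P_{X,n}\}_n$ of such design measures, $$\sup_{g\in\mathcal G}\int E|\hat g(x)-g(x)|^2\,\mathrm dP_{X,n}(x)=\mathcal O\big(\{\log n\}^{-2\beta/\gamma}\big)\quad (n\to\infty).$$
   Context: $\mathcal N_{\mathcal X}(\delta,\mathcal Y,\rho)$ denotes the covering number: the minimal number of open $\rho$-balls in $\mathcal X$ of radius $\delta$ whose union contains $\mathcal Y$. A Polish metric space is a separable complete metric space. The expectation $E$ is over the data $(X_j,Y_j)_{j\le n}$ for fixed $x$. *)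

theory Defs
  imports "HOL-Probability.Probability"
begin

text \<open>Covering number N_X(delta, Y, rho): minimal number of open balls of radius delta,
  with centres in the whole space X (the type), whose union contains Y; infinity if no
  finite cover exists.\<close>
definition covering_number :: "real \<Rightarrow> 'a::metric_space set \<Rightarrow> enat" where
  "covering_number \<delta> Y = Inf {enat (card C) | C. finite C \<and> Y \<subseteq> (\<Union>c\<in>C. ball c \<delta>)}"

definition hoelder_class :: "'a::metric_space set \<Rightarrow> real \<Rightarrow> real \<Rightarrow> ('a \<Rightarrow> real) set" where
  "hoelder_class Y \<beta> C = {g. g \<in> borel_measurable borel \<and>
      (\<forall>y\<in>Y. \<bar>g y\<bar> \<le> C) \<and>
      (\<forall>y\<in>Y. \<forall>z\<in>Y. \<bar>g y - g z\<bar> \<le> C * dist y z powr \<beta>)}"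

definition Kh :: "real \<Rightarrow> real \<Rightarrow> real" where
  "Kh h r = indicator {0..<1} (r / h)"

text \<open>Data omega j = (X_j, eps_j); responses Y_j = g X_j + eps_j.\<close>
definition A_hat :: "nat \<Rightarrow> real \<Rightarrow> ('a::metric_space \<Rightarrow> real) \<Rightarrow> (nat \<Rightarrow> 'a \<times> real) \<Rightarrow> 'a \<Rightarrow> real" where
  "A_hat n h g \<omega> x = (1 / real n) * (\<Sum>j<n. (g (fst (\<omega> j)) + snd (\<omega> j)) * Kh h (dist x (fst (\<omega> j))))"

definition B_hat :: "nat \<Rightarrow> real \<Rightarrow> (nat \<Rightarrow> 'a::metric_space \<times> real) \<Rightarrow> 'a \<Rightarrow> real" where
  "B_hat n h \<omega> x = (1 / real n) * (\<Sum>j<n. Kh h (dist x (fst (\<omega> j))))"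

definition g_hat :: "nat \<Rightarrow> real \<Rightarrow> real \<Rightarrow> ('a::metric_space \<Rightarrow> real) \<Rightarrow> (nat \<Rightarrow> 'a \<times> real) \<Rightarrow> 'a \<Rightarrow> real" where
  "g_hat n h \<delta> g \<omega> x = (if B_hat n h \<omega> x > \<delta> then A_hat n h g \<omega> x / B_hat n h \<omega> x else 0)"

text \<open>Integrated mean squared error: int E|g_hat(x) - g(x)|^2 dP_X(x), where the expectation
  is w.r.t. the n-fold product of the law Q of (X_1, eps_1).\<close>
definition risk :: "nat \<Rightarrow> real \<Rightarrow> real \<Rightarrow> ('a::metric_space \<times> real) measure \<Rightarrow> ('a \<Rightarrow> real) \<Rightarrow> ennreal" where
  "risk n h \<delta> Q g = (\<integral>\<^sup>+ x. (\<integral>\<^sup>+ \<omega>. ennreal ((g_hat n h \<delta> g \<omega> x - g x)\<^sup>2) \<partial>(PiM {..<n} (\<lambda>_. Q))) \<partial>(distr Q borel fst))"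

end

theory Submission
  imports Defs "HOL-Real_Asymp.Real_Asymp"
begin

text \<open>At a point \<open>x\<close> whose \<open>h\<close>-ball carries design mass \<open>p \<ge> 2\<delta>\<close>, the squared error of the
  truncated uniform-kernel estimator is at most twice the squared bias \<open>(C h^\<beta>)^2\<close> (Hoelder
  continuity) plus a noise term of mean at most \<open>2 c_v / (n \<delta>^2)\<close>, except on the event
  \<open>B(x) \<le> \<delta>\<close>, which by Chebyshev has probability at most \<open>2 / (n \<delta>)\<close>. The points with a
  lighter \<open>h\<close>-ball lie in the union of those balls of a minimal \<open>h/2\<close>-cover of \<open>Y\<close> that are
  themselves lighter than \<open>2\<delta>\<close>, so they carry design mass at most
  \<open>2\<delta> N(h/2) \<le> 2 n^(c_1 2^\<gamma> d - \<eta>)\<close> by the entropy bound. For \<open>h = (d log n)^(-1/\<gamma>)\<close> and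
  \<open>d < \<eta> 4^(-\<gamma>) / c_1\<close> all terms except the bias decay polynomially in \<open>n\<close>, and the squared bias
  is a multiple of \<open>(log n)^(-2\<beta>/\<gamma>)\<close>.\<close>

lemma
  fixes Q :: "'b measure" and f :: "'b \<Rightarrow> real" and i j n :: nat
  assumes Q: "prob_space Q" and f: "f \<in> borel_measurable Q"
    and f2: "integrable Q (\<lambda>z. (f z)\<^sup>2)" and f0: "(\<integral>z. f z \<partial>Q) = 0"
    and ij: "i < n" "j < n"
  shows integrable_PiM_mult_components:
      "integrable (PiM {..<n} (\<lambda>_. Q)) (\<lambda>\<omega>. f (\<omega> i) * f (\<omega> j))"
    and integral_PiM_mult_components:
      "(\<integral>\<omega>. f (\<omega> i) * f (\<omega> j) \<partial>PiM {..<n} (\<lambda>_. Q)) = (if i = j then (\<integral>z. (f z)\<^sup>2 \<partial>Q) else 0)"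
proof -
  interpret Q: prob_space Q by fact
  interpret product_sigma_finite "\<lambda>_. Q"
    by (simp add: product_sigma_finite_def Q.sigma_finite_measure_axioms)
  have fi: "integrable Q f"
    by (rule Q.square_integrable_imp_integrable[OF f f2])
  define F where "F k = (\<lambda>z. (if k = i then f z else 1) * (if k = j then f z else (1::real)))" for k
  have F_int: "integrable Q (F k)" for k
    using fi f2 by (cases "k = i"; cases "k = j") (auto simp: F_def power2_eq_square)
  have F_prod: "(\<Prod>k<n. F k (\<omega> k)) = f (\<omega> i) * f (\<omega> j)" for \<omega>
    using ij by (simp add: F_def prod.distrib)
  have "(\<Prod>k<n. integral\<^sup>L Q (F k)) = (if i = j then (\<integral>z. (f z)\<^sup>2 \<partial>Q) else 0)"
  proof (cases "i = j")
    case True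
    then have "(\<Prod>k<n. integral\<^sup>L Q (F k)) = (\<Prod>k<n. if k = i then (\<integral>z. (f z)\<^sup>2 \<partial>Q) else 1)"
      by (intro prod.cong) (auto simp: F_def power2_eq_square Q.prob_space)
    with True ij show ?thesis by simp
  next
    case False
    then have "integral\<^sup>L Q (F i) = 0" using f0 by (simp add: F_def)
    with False ij show ?thesis by (auto intro!: prod_zero)
  qed
  then show "integrable (PiM {..<n} (\<lambda>_. Q)) (\<lambda>\<omega>. f (\<omega> i) * f (\<omega> j))"
    and "(\<integral>\<omega>. f (\<omega> i) * f (\<omega> j) \<partial>PiM {..<n} (\<lambda>_. Q)) = (if i = j then (\<integral>z. (f z)\<^sup>2 \<partial>Q) else 0)"
    using product_integrable_prod[of "{..<n}" F] product_integral_prod[of "{..<n}" F] F_int F_prod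
    by simp_all
qed

lemma
  fixes Q :: "'b measure" and f :: "'b \<Rightarrow> real"
  assumes "prob_space Q" "f \<in> borel_measurable Q"
    and "integrable Q (\<lambda>z. (f z)\<^sup>2)" "(\<integral>z. f z \<partial>Q) = 0"
  shows integrable_PiM_square_sum:
      "integrable (PiM {..<n} (\<lambda>_. Q)) (\<lambda>\<omega>. (\<Sum>j<n. f (\<omega> j))\<^sup>2)"
    and integral_PiM_square_sum:
      "(\<integral>\<omega>. (\<Sum>j<n. f (\<omega> j))\<^sup>2 \<partial>PiM {..<n} (\<lambda>_. Q)) = real n * (\<integral>z. (f z)\<^sup>2 \<partial>Q)"
proof -
  note prod_int = integrable_PiM_mult_components[OF assms]
  have square_eq: "(\<Sum>j<n. f (\<omega> j))\<^sup>2 = (\<Sum>i<n. \<Sum>j<n. f (\<omega> i) * f (\<omega> j))" for \<omega>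
    by (simp add: power2_eq_square sum_product)
  show "integrable (PiM {..<n} (\<lambda>_. Q)) (\<lambda>\<omega>. (\<Sum>j<n. f (\<omega> j))\<^sup>2)"
    unfolding square_eq by (intro Bochner_Integration.integrable_sum prod_int) auto
  have "(\<integral>\<omega>. (\<Sum>j<n. f (\<omega> j))\<^sup>2 \<partial>PiM {..<n} (\<lambda>_. Q))
      = (\<Sum>i<n. \<Sum>j<n. (\<integral>\<omega>. f (\<omega> i) * f (\<omega> j) \<partial>PiM {..<n} (\<lambda>_. Q)))"
    unfolding square_eq
    by (subst Bochner_Integration.integral_sum)
       (auto intro!: Bochner_Integration.integrable_sum sum.cong Bochner_Integration.integral_sum prod_int)
  also have "\<dots> = (\<Sum>i<n. \<Sum>j<n. if i = j then (\<integral>z. (f z)\<^sup>2 \<partial>Q) else 0)"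
    by (intro sum.cong refl) (simp add: integral_PiM_mult_components[OF assms])
  finally show "(\<integral>\<omega>. (\<Sum>j<n. f (\<omega> j))\<^sup>2 \<partial>PiM {..<n} (\<lambda>_. Q)) = real n * (\<integral>z. (f z)\<^sup>2 \<partial>Q)"
    by simp
qed

text \<open>\<open>Q\<close> is the joint law of one pair \<open>(X\<^sub>j, \<epsilon>\<^sub>j)\<close>.\<close>

locale regression_noise = prob_space Q
  for Q :: "('a::polish_space \<times> real) measure" and cv :: real +
  assumes sets_eq_borel: "sets Q = sets borel"
    and noise_square_integrable: "integrable Q (\<lambda>z. (snd z)\<^sup>2)"
    and noise_cond_mean: "AE z in Q. real_cond_exp Q (vimage_algebra (space Q) fst borel) snd z = 0"
    and noise_cond_var: "AE z in Q. real_cond_exp Q (vimage_algebra (space Q) fst borel) (\<lambda>z. (snd z)\<^sup>2) z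
          - (real_cond_exp Q (vimage_algebra (space Q) fst borel) snd z)\<^sup>2 \<le> cv"
begin

lemma measurable_fst_snd [measurable]:
  "fst \<in> borel_measurable Q" "snd \<in> borel_measurable Q"
  by (simp_all add: measurable_cong_sets[OF sets_eq_borel refl] borel_measurable_continuous_onI
      continuous_on_fst continuous_on_snd continuous_on_id)

abbreviation design_algebra where
  "design_algebra \<equiv> vimage_algebra (space Q) fst borel"

lemma subalgebra_design: "subalgebra Q design_algebra"
  using sets_image_in_sets[OF refl measurable_fst_snd(1)] by (simp add: subalgebra_def)

sublocale design: finite_measure_subalgebra Q design_algebra
  by unfold_locales (rule subalgebra_design)

lemma integral_noise_mult_design_eq_0:
  assumes \<phi>: "\<phi> \<in> borel_measurable borel" and bounded: "\<And>x. \<bar>\<phi> x\<bar> \<le> B"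
  shows "(\<integral>z. snd z * \<phi> (fst z) \<partial>Q) = 0"
proof -
  have \<phi>_design: "(\<lambda>z. \<phi> (fst z)) \<in> borel_measurable design_algebra"
    by (rule measurable_compose[OF measurable_vimage_algebra1 \<phi>]) auto
  have "integrable Q snd"
    by (rule square_integrable_imp_integrable[OF _ noise_square_integrable]) simp
  then have "integrable Q (\<lambda>z. B * snd z)" by simp
  then have "integrable Q (\<lambda>z. \<phi> (fst z) * snd z)"
  proof (rule Bochner_Integration.integrable_bound)
    show "(\<lambda>z. \<phi> (fst z) * snd z) \<in> borel_measurable Q" using \<phi> by measurable
    show "AE z in Q. norm (\<phi> (fst z) * snd z) \<le> norm (B * snd z)"
      using bounded[THEN order_trans, OF abs_ge_self]
      by (intro AE_I2) (simp add: abs_mult mult_right_mono)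
  qed
  then have "(\<integral>z. \<phi> (fst z) * snd z \<partial>Q) = (\<integral>z. \<phi> (fst z) * real_cond_exp Q design_algebra snd z \<partial>Q)"
    using design.real_cond_exp_intg(2)[OF _ \<phi>_design] by simp
  also have "\<dots> = 0"
    using noise_cond_mean by (intro integral_eq_zero_AE) (auto elim: AE_mp)
  finally show ?thesis by (simp add: mult.commute)
qed

lemma integral_noise_square_le: "(\<integral>z. (snd z)\<^sup>2 \<partial>Q) \<le> cv"
proof -
  have "(\<integral>z. (snd z)\<^sup>2 \<partial>Q) = (\<integral>z. real_cond_exp Q design_algebra (\<lambda>z. (snd z)\<^sup>2) z \<partial>Q)"
    using design.real_cond_exp_int(2)[OF noise_square_integrable] by simp
  also have "\<dots> \<le> (\<integral>z. cv \<partial>Q)"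
    using noise_cond_mean noise_cond_var
    by (intro integral_mono_AE design.real_cond_exp_int(1)[OF noise_square_integrable]) (auto elim: AE_mp)
  finally show ?thesis by (simp add: prob_space)
qed

lemma variance_bound_nonneg: "0 \<le> cv"
proof -
  have "0 \<le> (\<integral>z. (snd z)\<^sup>2 \<partial>Q)"
    by (simp add: integral_nonneg_AE)
  with integral_noise_square_le show ?thesis by linarith
qed

end

lemma Kh_dist_eq_indicator_ball: "h > 0 \<Longrightarrow> Kh h (dist x y) = indicator (ball x h) y"
  by (simp add: Kh_def indicator_def divide_less_eq)

lemma B_hat_eq:
  "h > 0 \<Longrightarrow> B_hat n h \<omega> x = (\<Sum>j<n. indicator (ball x h) (fst (\<omega> j))) / real n"
  by (simp add: B_hat_def Kh_dist_eq_indicator_ball)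

lemma A_hat_eq:
  assumes "h > 0"
  shows "A_hat n h g \<omega> x = g x * B_hat n h \<omega> x
    + (\<Sum>j<n. (g (fst (\<omega> j)) - g x) * indicator (ball x h) (fst (\<omega> j))) / real n
    + (\<Sum>j<n. snd (\<omega> j) * indicator (ball x h) (fst (\<omega> j))) / real n"
proof -
  have "(\<Sum>j<n. (g (fst (\<omega> j)) + snd (\<omega> j)) * indicator (ball x h) (fst (\<omega> j)))
      = g x * (\<Sum>j<n. indicator (ball x h) (fst (\<omega> j)))
        + (\<Sum>j<n. (g (fst (\<omega> j)) - g x) * indicator (ball x h) (fst (\<omega> j)))
        + (\<Sum>j<n. snd (\<omega> j) * indicator (ball x h) (fst (\<omega> j)) :: real)"
    by (simp only: sum_distrib_left sum.distrib[symmetric]) (intro sum.cong; simp add: algebra_simps)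
  then show ?thesis
    using assms by (simp add: A_hat_def B_hat_eq Kh_dist_eq_indicator_ball add_divide_distrib)
qed

lemma abs_sum_hoelder_local_le:
  fixes g :: "'a::metric_space \<Rightarrow> real" and X :: "nat \<Rightarrow> 'a"
  assumes "0 \<le> C" "0 \<le> \<beta>" "x \<in> Y" "\<And>j. j < n \<Longrightarrow> X j \<in> Y"
    and hoelder: "\<forall>y\<in>Y. \<forall>z\<in>Y. \<bar>g y - g z\<bar> \<le> C * dist y z powr \<beta>"
  shows "\<bar>\<Sum>j<n. (g (X j) - g x) * indicator (ball x h) (X j)\<bar>
    \<le> C * h powr \<beta> * (\<Sum>j<n. indicator (ball x h) (X j))"
proof -
  have "\<bar>(g (X j) - g x) * indicator (ball x h) (X j)\<bar> \<le> C * h powr \<beta> * indicator (ball x h) (X j)"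
    if "j < n" for j
  proof (cases "X j \<in> ball x h")
    case True
    have "\<bar>g (X j) - g x\<bar> \<le> C * dist (X j) x powr \<beta>"
      using hoelder assms(3,4) that by blast
    also have "\<dots> \<le> C * h powr \<beta>"
      using True assms(1,2) by (intro mult_left_mono powr_mono2) (auto simp: dist_commute)
    finally show ?thesis using True by simp
  qed simp
  then have "\<bar>\<Sum>j<n. (g (X j) - g x) * indicator (ball x h) (X j)\<bar>
      \<le> (\<Sum>j<n. C * h powr \<beta> * indicator (ball x h) (X j))"
    by (intro order_trans[OF sum_abs sum_mono]) simp
  then show ?thesis by (simp add: sum_distrib_left)
qed

lemma g_hat_error_square_le:
  fixes \<omega> :: "nat \<Rightarrow> 'a::metric_space \<times> real"
  assumes n: "n > 0" and h: "h > 0" and \<delta>: "\<delta> > 0" and \<beta>: "0 \<le> \<beta>" and C: "0 \<le> C"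
    and x: "x \<in> Y" and design: "\<And>j. j < n \<Longrightarrow> fst (\<omega> j) \<in> Y"
    and bounded: "\<forall>y\<in>Y. \<bar>g y\<bar> \<le> C"
    and hoelder: "\<forall>y\<in>Y. \<forall>z\<in>Y. \<bar>g y - g z\<bar> \<le> C * dist y z powr \<beta>"
  shows "(g_hat n h \<delta> g \<omega> x - g x)\<^sup>2 \<le> 2 * (C * h powr \<beta>)\<^sup>2
      + 2 / (real n * \<delta>)\<^sup>2 * (\<Sum>j<n. snd (\<omega> j) * indicator (ball x h) (fst (\<omega> j)))\<^sup>2
      + C\<^sup>2 * indicator {..\<delta>} (B_hat n h \<omega> x)"
    (is "_ \<le> ?bias + ?noise + ?empty")
proof (cases "B_hat n h \<omega> x > \<delta>")
  case True
  define m where "m = (\<Sum>j<n. indicator (ball x h) (fst (\<omega> j)) :: real)"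
  define T where "T = (\<Sum>j<n. (g (fst (\<omega> j)) - g x) * indicator (ball x h) (fst (\<omega> j)))"
  define S where "S = (\<Sum>j<n. snd (\<omega> j) * indicator (ball x h) (fst (\<omega> j)))"
  have m_gt: "real n * \<delta> < m"
    using True n by (simp add: B_hat_eq[OF h] m_def field_simps)
  have "0 < real n * \<delta>"
    using n \<delta> by simp
  with m_gt have m_pos: "0 < m" by linarith
  have "g_hat n h \<delta> g \<omega> x - g x = (T + S) / m"
    using True n m_pos
    by (simp add: g_hat_def A_hat_eq[OF h] B_hat_eq[OF h] m_def T_def S_def field_simps)
  then have "(g_hat n h \<delta> g \<omega> x - g x)\<^sup>2 = (T + S)\<^sup>2 / m\<^sup>2"
    by (simp add: power_divide)
  also have "\<dots> \<le> (2 * T\<^sup>2 + 2 * S\<^sup>2) / m\<^sup>2"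
    using zero_le_power2[of "T - S"] by (intro divide_right_mono) (simp_all add: power2_eq_square algebra_simps)
  also have "\<dots> = 2 * (T / m)\<^sup>2 + 2 * (S / m)\<^sup>2"
    by (simp add: power_divide add_divide_distrib)
  also have "(T / m)\<^sup>2 \<le> (C * h powr \<beta>)\<^sup>2"
  proof -
    have "\<bar>T\<bar> \<le> C * h powr \<beta> * m"
      unfolding T_def m_def by (rule abs_sum_hoelder_local_le[OF C \<beta> x design hoelder])
    then have "\<bar>T / m\<bar> \<le> \<bar>C * h powr \<beta>\<bar>"
      using m_pos C by (simp add: pos_divide_le_eq)
    then show ?thesis by (simp only: abs_le_square_iff)
  qed
  also have "(S / m)\<^sup>2 \<le> S\<^sup>2 / (real n * \<delta>)\<^sup>2"
    using m_gt m_pos n \<delta> unfolding power_divide by (intro divide_left_mono power_mono) auto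
  finally have "(g_hat n h \<delta> g \<omega> x - g x)\<^sup>2 \<le> ?bias + 2 * (S\<^sup>2 / (real n * \<delta>)\<^sup>2)"
    by simp
  moreover have "?noise = 2 * (S\<^sup>2 / (real n * \<delta>)\<^sup>2)" and "0 \<le> ?empty"
    by (simp_all add: S_def)
  ultimately show ?thesis by linarith
next
  case False
  then have "(g_hat n h \<delta> g \<omega> x - g x)\<^sup>2 = (g x)\<^sup>2" and "?empty = C\<^sup>2"
    by (simp_all add: g_hat_def)
  moreover have "(g x)\<^sup>2 \<le> C\<^sup>2"
    using bounded x C by (simp add: abs_le_square_iff[symmetric])
  moreover have "0 \<le> ?bias" "0 \<le> ?noise"
    by simp_all
  ultimately show ?thesis by linarith
qed

lemma indicator_atMost_le_deviation_square:
  fixes b p \<delta> :: real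
  assumes "0 < \<delta>" "2 * \<delta> \<le> p"
  shows "indicator {..\<delta>} b \<le> 4 / p\<^sup>2 * (b - p)\<^sup>2"
proof (cases "b \<le> \<delta>")
  case True
  then have "(p / 2)\<^sup>2 \<le> (p - b)\<^sup>2"
    using assms by (intro power_mono) auto
  then show ?thesis
    using True assms by (simp add: power2_commute[of b] field_simps power2_eq_square)
qed simp

context regression_noise
begin

abbreviation sample :: "nat \<Rightarrow> (nat \<Rightarrow> 'a \<times> real) measure" where
  "sample n \<equiv> PiM {..<n} (\<lambda>_. Q)"

lemma prob_space_sample: "prob_space (sample n)"
  by (intro prob_space_PiM prob_space_axioms)

lemma
  assumes A: "A \<in> sets borel"
  shows integrable_local_noise_sum_square:
      "integrable (sample n) (\<lambda>\<omega>. (\<Sum>j<n. snd (\<omega> j) * indicator A (fst (\<omega> j)))\<^sup>2)"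
    and integral_local_noise_sum_square_le:
      "(\<integral>\<omega>. (\<Sum>j<n. snd (\<omega> j) * indicator A (fst (\<omega> j)))\<^sup>2 \<partial>sample n) \<le> real n * cv"
proof -
  define f where "f z = snd z * indicator A (fst z)" for z :: "'a \<times> real"
  have f_meas: "f \<in> borel_measurable Q"
    unfolding f_def using A by measurable
  have f_square_le: "(f z)\<^sup>2 \<le> (snd z)\<^sup>2" for z
    by (simp add: f_def indicator_def)
  have f_square_int: "integrable Q (\<lambda>z. (f z)\<^sup>2)"
    by (rule Bochner_Integration.integrable_bound[OF noise_square_integrable])
       (use f_meas f_square_le in auto)
  have f_centered: "(\<integral>z. f z \<partial>Q) = 0"
    unfolding f_def using A by (intro integral_noise_mult_design_eq_0[where B=1]) auto
  note moments = integrable_PiM_square_sum[OF prob_space_axioms f_meas f_square_int f_centered]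
    integral_PiM_square_sum[OF prob_space_axioms f_meas f_square_int f_centered]
  then show "integrable (sample n) (\<lambda>\<omega>. (\<Sum>j<n. snd (\<omega> j) * indicator A (fst (\<omega> j)))\<^sup>2)"
    by (simp add: f_def)
  have "(\<integral>z. (f z)\<^sup>2 \<partial>Q) \<le> cv"
    using integral_mono[OF f_square_int noise_square_integrable f_square_le] integral_noise_square_le
    by linarith
  then show "(\<integral>\<omega>. (\<Sum>j<n. snd (\<omega> j) * indicator A (fst (\<omega> j)))\<^sup>2 \<partial>sample n) \<le> real n * cv"
    using moments by (simp add: f_def mult_left_mono)
qed

lemma
  assumes A: "A \<in> sets borel"
  defines "p \<equiv> \<integral>z. indicator A (fst z) \<partial>Q"
  shows integrable_count_deviation_square:
      "integrable (sample n) (\<lambda>\<omega>. (\<Sum>j<n. indicator A (fst (\<omega> j)) - p)\<^sup>2)"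
    and integral_count_deviation_square_le:
      "(\<integral>\<omega>. (\<Sum>j<n. indicator A (fst (\<omega> j)) - p)\<^sup>2 \<partial>sample n) \<le> real n * p"
proof -
  define f where "f z = indicator A (fst z) - p" for z :: "'a \<times> real"
  have f_meas: "f \<in> borel_measurable Q"
    unfolding f_def using A by measurable
  have ind_int: "integrable Q (\<lambda>z. indicator A (fst z) :: real)"
    using A by (intro integrable_const_bound[where B=1]) auto
  have f_square: "(f z)\<^sup>2 = (1 - 2 * p) * indicator A (fst z) + p\<^sup>2" for z
    by (simp add: f_def indicator_def power2_eq_square algebra_simps)
  have f_square_int: "integrable Q (\<lambda>z. (f z)\<^sup>2)"
    unfolding f_square using ind_int by simp
  have f_centered: "(\<integral>z. f z \<partial>Q) = 0"
    unfolding f_def using ind_int by (simp add: p_def prob_space)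
  have "0 \<le> p"
    unfolding p_def by (simp add: integral_nonneg_AE)
  then have "(\<integral>z. (f z)\<^sup>2 \<partial>Q) \<le> p"
    unfolding f_square using ind_int by (simp add: p_def[symmetric] prob_space power2_eq_square algebra_simps)
  moreover note moments = integrable_PiM_square_sum[OF prob_space_axioms f_meas f_square_int f_centered]
    integral_PiM_square_sum[OF prob_space_axioms f_meas f_square_int f_centered]
  ultimately show "integrable (sample n) (\<lambda>\<omega>. (\<Sum>j<n. indicator A (fst (\<omega> j)) - p)\<^sup>2)"
    and "(\<integral>\<omega>. (\<Sum>j<n. indicator A (fst (\<omega> j)) - p)\<^sup>2 \<partial>sample n) \<le> real n * p"
    by (simp_all add: f_def mult_left_mono)
qed

text \<open>The estimator need not be measurable in the sample, so the event \<open>B(x) \<le> \<delta>\<close> is controlled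
  by an integrable pointwise majorant (Chebyshev's bound) rather than by its probability.\<close>

lemma low_count_indicator_majorant:
  fixes x :: 'a
  assumes n: "n > 0" and h: "h > 0" and \<delta>: "\<delta> > 0"
  defines "p \<equiv> \<integral>z. indicator (ball x h) (fst z) \<partial>Q"
  obtains \<Psi> where "integrable (sample n) \<Psi>" "\<And>\<omega>. 0 \<le> \<Psi> \<omega>"
    "\<And>\<omega>. indicator {..\<delta>} (B_hat n h \<omega> x) \<le> \<Psi> \<omega>"
    "(\<integral>\<omega>. \<Psi> \<omega> \<partial>sample n) \<le> (if 2 * \<delta> \<le> p then 2 / (real n * \<delta>) else 1)"
proof -
  define D where "D \<omega> = (\<Sum>j<n. indicator (ball x h) (fst (\<omega> j)) - p)" for \<omega> :: "nat \<Rightarrow> 'a \<times> real"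
  define w where "w = (if 2 * \<delta> \<le> p then 4 / (p * real n)\<^sup>2 else 0)"
  define w0 where "w0 = (if 2 * \<delta> \<le> p then 0 else 1 :: real)"
  interpret sample: prob_space "sample n" by (rule prob_space_sample)
  have ball: "ball x h \<in> sets borel" by simp
  show ?thesis
  proof
    show "integrable (sample n) (\<lambda>\<omega>. w * (D \<omega>)\<^sup>2 + w0)"
      using integrable_count_deviation_square[OF ball, of n] by (simp add: D_def p_def)
    show "0 \<le> w * (D \<omega>)\<^sup>2 + w0" for \<omega>
      by (simp add: w_def w0_def)
    show "indicator {..\<delta>} (B_hat n h \<omega> x) \<le> w * (D \<omega>)\<^sup>2 + w0" for \<omega>
    proof (cases "2 * \<delta> \<le> p")
      case True
      have "B_hat n h \<omega> x - p = D \<omega> / real n"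
        using n by (simp add: B_hat_eq[OF h] D_def sum_subtractf field_simps)
      then show ?thesis
        using indicator_atMost_le_deviation_square[OF \<delta> True, of "B_hat n h \<omega> x"] True
        by (simp add: w_def w0_def power_divide power_mult_distrib)
    qed (simp add: w_def w0_def indicator_def)
    show "(\<integral>\<omega>. w * (D \<omega>)\<^sup>2 + w0 \<partial>sample n) \<le> (if 2 * \<delta> \<le> p then 2 / (real n * \<delta>) else 1)"
    proof (cases "2 * \<delta> \<le> p")
      case True
      have "(\<integral>\<omega>. w * (D \<omega>)\<^sup>2 + w0 \<partial>sample n) = w * (\<integral>\<omega>. (D \<omega>)\<^sup>2 \<partial>sample n)"
        using True integrable_count_deviation_square[OF ball, of n] by (simp add: D_def p_def w0_def)
      also have "\<dots> \<le> w * (real n * p)"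
        using integral_count_deviation_square_le[OF ball, of n] by (intro mult_left_mono)
          (simp_all add: D_def p_def w_def)
      also have "\<dots> = 4 / (real n * p)"
        using True n \<delta> by (simp add: w_def power2_eq_square field_simps)
      also have "\<dots> \<le> 2 / (real n * \<delta>)"
        using True n \<delta> by (simp add: field_simps)
      finally show ?thesis using True by simp
    qed (simp add: w_def w0_def sample.prob_space)
  qed
qed

lemma nn_integral_g_hat_error_le:
  assumes n: "n > 0" and h: "h > 0" and \<delta>: "\<delta> > 0" and \<beta>: "0 \<le> \<beta>" and C: "0 \<le> C"
    and x: "x \<in> Y" and design: "AE z in Q. fst z \<in> Y"
    and bounded: "\<forall>y\<in>Y. \<bar>g y\<bar> \<le> C"
    and hoelder: "\<forall>y\<in>Y. \<forall>z\<in>Y. \<bar>g y - g z\<bar> \<le> C * dist y z powr \<beta>"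
  defines "p \<equiv> \<integral>z. indicator (ball x h) (fst z) \<partial>Q"
  shows "(\<integral>\<^sup>+\<omega>. ennreal ((g_hat n h \<delta> g \<omega> x - g x)\<^sup>2) \<partial>sample n)
    \<le> ennreal (2 * (C * h powr \<beta>)\<^sup>2 + 2 * cv / (real n * \<delta>\<^sup>2)
        + C\<^sup>2 * (if 2 * \<delta> \<le> p then 2 / (real n * \<delta>) else 1))"
proof -
  interpret sample: prob_space "sample n" by (rule prob_space_sample)
  obtain \<Psi> where \<Psi>: "integrable (sample n) \<Psi>" "\<And>\<omega>. 0 \<le> \<Psi> \<omega>"
    "\<And>\<omega>. indicator {..\<delta>} (B_hat n h \<omega> x) \<le> \<Psi> \<omega>"
    "(\<integral>\<omega>. \<Psi> \<omega> \<partial>sample n) \<le> (if 2 * \<delta> \<le> p then 2 / (real n * \<delta>) else 1)"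
    using low_count_indicator_majorant[OF n h \<delta>] unfolding p_def by blast
  define S where "S \<omega> = (\<Sum>j<n. snd (\<omega> j) * indicator (ball x h) (fst (\<omega> j)))"
    for \<omega> :: "nat \<Rightarrow> 'a \<times> real"
  define \<Phi> where "\<Phi> \<omega> = 2 * (C * h powr \<beta>)\<^sup>2 + 2 / (real n * \<delta>)\<^sup>2 * (S \<omega>)\<^sup>2 + C\<^sup>2 * \<Psi> \<omega>" for \<omega>
  have ball: "ball x h \<in> sets borel" by simp
  note S_int = integrable_local_noise_sum_square[OF ball, of n, folded S_def]
  have "AE \<omega> in sample n. \<forall>j\<in>{..<n}. fst (\<omega> j) \<in> Y"
    by (intro AE_finite_allI AE_PiM_component[where P="\<lambda>z. fst z \<in> Y"] prob_space_axioms design) auto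
  then have "AE \<omega> in sample n. ennreal ((g_hat n h \<delta> g \<omega> x - g x)\<^sup>2) \<le> ennreal (\<Phi> \<omega>)"
  proof eventually_elim
    case (elim \<omega>)
    have "(g_hat n h \<delta> g \<omega> x - g x)\<^sup>2 \<le> 2 * (C * h powr \<beta>)\<^sup>2 + 2 / (real n * \<delta>)\<^sup>2 * (S \<omega>)\<^sup>2
        + C\<^sup>2 * indicator {..\<delta>} (B_hat n h \<omega> x)"
      using g_hat_error_square_le[OF n h \<delta> \<beta> C x _ bounded hoelder] elim by (simp add: S_def)
    also have "\<dots> \<le> \<Phi> \<omega>"
      unfolding \<Phi>_def using \<Psi>(3)[of \<omega>] by (simp add: mult_left_mono)
    finally show ?case by (rule ennreal_leI)
  qed
  then have "(\<integral>\<^sup>+\<omega>. ennreal ((g_hat n h \<delta> g \<omega> x - g x)\<^sup>2) \<partial>sample n) \<le> (\<integral>\<^sup>+\<omega>. ennreal (\<Phi> \<omega>) \<partial>sample n)"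
    by (rule nn_integral_mono_AE)
  also have "\<dots> = ennreal (\<integral>\<omega>. \<Phi> \<omega> \<partial>sample n)"
    using S_int \<Psi>(1,2) by (intro nn_integral_eq_integral) (simp_all add: \<Phi>_def)
  also have "(\<integral>\<omega>. \<Phi> \<omega> \<partial>sample n) = 2 * (C * h powr \<beta>)\<^sup>2
      + 2 / (real n * \<delta>)\<^sup>2 * (\<integral>\<omega>. (S \<omega>)\<^sup>2 \<partial>sample n) + C\<^sup>2 * (\<integral>\<omega>. \<Psi> \<omega> \<partial>sample n)"
    unfolding \<Phi>_def using S_int \<Psi>(1) by (simp add: sample.prob_space)
  also have "2 / (real n * \<delta>)\<^sup>2 * (\<integral>\<omega>. (S \<omega>)\<^sup>2 \<partial>sample n) \<le> 2 / (real n * \<delta>)\<^sup>2 * (real n * cv)"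
    using integral_local_noise_sum_square_le[OF ball, of n] by (intro mult_left_mono) (simp_all add: S_def)
  also have "2 / (real n * \<delta>)\<^sup>2 * (real n * cv) = 2 * cv / (real n * \<delta>\<^sup>2)"
    using n \<delta> by (simp add: power2_eq_square field_simps)
  also have "C\<^sup>2 * (\<integral>\<omega>. \<Psi> \<omega> \<partial>sample n) \<le> C\<^sup>2 * (if 2 * \<delta> \<le> p then 2 / (real n * \<delta>) else 1)"
    using \<Psi>(4) by (rule mult_left_mono) simp
  finally show ?thesis
    by (simp add: ennreal_leI)
qed
end

lemma finite_cover_card_le_exp:
  fixes Y :: "'a::metric_space set"
  assumes finite: "covering_number s Y \<noteq> \<infinity>"
    and entropy: "ln (real (the_enat (covering_number s Y))) \<le> B"
  obtains Cv where "finite Cv" "Y \<subseteq> (\<Union>c\<in>Cv. ball c s)" "real (card Cv) \<le> exp B"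
proof -
  define covers where "covers = {enat (card C) | C. finite C \<and> Y \<subseteq> (\<Union>c\<in>C. ball c s)}"
  have cn: "covering_number s Y = Inf covers"
    unfolding covering_number_def covers_def ..
  have "covers \<noteq> {}"
    using finite unfolding cn by (auto simp: Inf_enat_def)
  then have "covering_number s Y \<in> covers"
    unfolding cn Inf_enat_def by (auto intro: LeastI_ex)
  then obtain Cv where Cv: "finite Cv" "Y \<subseteq> (\<Union>c\<in>Cv. ball c s)" "covering_number s Y = card Cv"
    unfolding covers_def by auto
  have "real (card Cv) \<le> exp B"
  proof (cases "card Cv = 0")
    case False
    then have "real (card Cv) = exp (ln (real (card Cv)))" by simp
    also have "\<dots> \<le> exp B" using entropy Cv(3) by simp
    finally show ?thesis .
  qed simp
  with Cv show ?thesis using that by blast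
qed

lemma light_ball_region:
  fixes M :: "'a::metric_space measure"
  assumes M: "finite_measure M" "sets M = sets borel"
    and cover: "finite Cv" "Y \<subseteq> (\<Union>c\<in>Cv. ball c (h / 2))" and \<epsilon>: "0 \<le> \<epsilon>"
  obtains T where "T \<in> sets borel" "\<And>x. x \<in> Y \<Longrightarrow> measure M (ball x h) < \<epsilon> \<Longrightarrow> x \<in> T"
    "measure M T \<le> \<epsilon> * card Cv"
proof -
  interpret finite_measure M by fact
  define Cv' where "Cv' = {c \<in> Cv. \<exists>x\<in>ball c (h / 2) \<inter> Y. measure M (ball x h) < \<epsilon>}"
  define T where "T = (\<Union>c\<in>Cv'. ball c (h / 2))"
  have fin: "finite Cv'" "Cv' \<subseteq> Cv"
    using cover by (auto simp: Cv'_def)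
  have light: "measure M (ball c (h / 2)) \<le> \<epsilon>" if c: "c \<in> Cv'" for c
  proof -
    obtain x where x: "x \<in> ball c (h / 2)" "measure M (ball x h) < \<epsilon>"
      using c unfolding Cv'_def by blast
    have "ball c (h / 2) \<subseteq> ball x h"
    proof
      fix y assume "y \<in> ball c (h / 2)"
      with x(1) show "y \<in> ball x h"
        using dist_triangle[of x y c] by (simp add: dist_commute)
    qed
    then have "measure M (ball c (h / 2)) \<le> measure M (ball x h)"
      using M(2) by (intro finite_measure_mono) auto
    with x(2) show ?thesis by simp
  qed
  show ?thesis
  proof
    show "T \<in> sets borel" unfolding T_def using fin by auto
    show "x \<in> T" if x: "x \<in> Y" "measure M (ball x h) < \<epsilon>" for x
    proof -
      obtain c where "c \<in> Cv" "x \<in> ball c (h / 2)"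
        using x(1) cover(2) by blast
      with x show ?thesis unfolding T_def Cv'_def by blast
    qed
    have "measure M T \<le> (\<Sum>c\<in>Cv'. measure M (ball c (h / 2)))"
      unfolding T_def using fin M(2) by (intro measure_UNION_le) auto
    also have "\<dots> \<le> (\<Sum>c\<in>Cv'. \<epsilon>)"
      by (intro sum_mono light)
    also have "\<dots> \<le> \<epsilon> * card Cv"
      using fin \<epsilon> card_mono[OF cover(1) fin(2)] by (simp add: mult.commute mult_left_mono)
    finally show "measure M T \<le> \<epsilon> * card Cv" .
  qed
qed

lemma half_bandwidth_powr_neg:
  fixes d x \<gamma> :: real
  assumes "0 < d" "1 < x" "0 < \<gamma>"
  shows "((d * ln x) powr (-1/\<gamma>) / 2) powr (-\<gamma>) = 2 powr \<gamma> * (d * ln x)"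
proof -
  have "((d * ln x) powr (-1/\<gamma>) / 2) powr (-\<gamma>) = ((d * ln x) powr (-1/\<gamma>)) powr (-\<gamma>) / 2 powr (-\<gamma>)"
    by (simp add: powr_divide)
  also have "((d * ln x) powr (-1/\<gamma>)) powr (-\<gamma>) = d * ln x"
    using assms by (simp add: powr_powr)
  also have "d * ln x / 2 powr (-\<gamma>) = 2 powr \<gamma> * (d * ln x)"
    by (simp add: powr_minus divide_inverse)
  finally show ?thesis .
qed

text \<open>The four terms are the squared bias, the noise, the event \<open>B(x) \<le> \<delta>\<close> at points with a heavy
  ball, and the design mass \<open>2\<delta>N\<close> of the points with a light ball, \<open>N\<close> bounding the cover size.\<close>

definition risk_bound :: "real \<Rightarrow> real \<Rightarrow> real \<Rightarrow> nat \<Rightarrow> real \<Rightarrow> real \<Rightarrow> real \<Rightarrow> real" where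
  "risk_bound C \<beta> cv n h \<delta> N = 2 * (C * h powr \<beta>)\<^sup>2 + 2 * cv / (real n * \<delta>\<^sup>2)
     + 2 * C\<^sup>2 / (real n * \<delta>) + 2 * C\<^sup>2 * \<delta> * N"

context regression_noise
begin

lemma integral_indicator_fst:
  "A \<in> sets borel \<Longrightarrow> (\<integral>z. indicator A (fst z) \<partial>Q) = measure (distr Q borel fst) A"
  by (subst integral_distr[symmetric]) (auto intro: borel_measurable_indicator)

lemma nn_integral_g_hat_error_le_indicator:
  assumes n: "n > 0" and h: "h > 0" and \<delta>: "\<delta> > 0" and \<beta>: "0 \<le> \<beta>" and C: "0 \<le> C"
    and x: "x \<in> Y" and design: "AE z in Q. fst z \<in> Y"
    and bounded: "\<forall>y\<in>Y. \<bar>g y\<bar> \<le> C"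
    and hoelder: "\<forall>y\<in>Y. \<forall>z\<in>Y. \<bar>g y - g z\<bar> \<le> C * dist y z powr \<beta>"
    and light: "measure (distr Q borel fst) (ball x h) < 2 * \<delta> \<Longrightarrow> x \<in> T"
  shows "(\<integral>\<^sup>+\<omega>. ennreal ((g_hat n h \<delta> g \<omega> x - g x)\<^sup>2) \<partial>sample n)
    \<le> ennreal (2 * (C * h powr \<beta>)\<^sup>2 + 2 * cv / (real n * \<delta>\<^sup>2) + 2 * C\<^sup>2 / (real n * \<delta>)
        + C\<^sup>2 * indicator T x)"
proof -
  note error_bound = nn_integral_g_hat_error_le[OF n h \<delta> \<beta> C x design bounded hoelder,
      unfolded integral_indicator_fst[OF borel_open[OF open_ball]]]
  have nonneg: "0 \<le> 2 * cv / (real n * \<delta>\<^sup>2)" "0 \<le> 2 * C\<^sup>2 / (real n * \<delta>)"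
    using variance_bound_nonneg n \<delta> by simp_all
  have "2 * (C * h powr \<beta>)\<^sup>2 + 2 * cv / (real n * \<delta>\<^sup>2)
      + C\<^sup>2 * (if 2 * \<delta> \<le> measure (distr Q borel fst) (ball x h) then 2 / (real n * \<delta>) else 1)
    \<le> 2 * (C * h powr \<beta>)\<^sup>2 + 2 * cv / (real n * \<delta>\<^sup>2) + 2 * C\<^sup>2 / (real n * \<delta>) + C\<^sup>2 * indicator T x"
  proof (cases "2 * \<delta> \<le> measure (distr Q borel fst) (ball x h)")
    case True
    have "C\<^sup>2 * (2 / (real n * \<delta>)) = 2 * C\<^sup>2 / (real n * \<delta>)" "0 \<le> C\<^sup>2 * indicator T x"
      by simp_all
    then show ?thesis unfolding if_P[OF True] by linarith
  next
    case False
    with light nonneg show ?thesis by simp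
  qed
  from order_trans[OF error_bound ennreal_leI[OF this]] show ?thesis .
qed

lemma risk_le:
  assumes n: "n > 0" and h: "h > 0" and \<delta>: "\<delta> > 0" and \<beta>: "0 \<le> \<beta>" and C: "0 \<le> C"
    and Y: "Y \<in> sets borel" and design: "measure (distr Q borel fst) Y = 1"
    and g: "g \<in> hoelder_class Y \<beta> C"
    and cover: "finite Cv" "Y \<subseteq> (\<Union>c\<in>Cv. ball c (h / 2))"
  shows "risk n h \<delta> Q g \<le> ennreal (risk_bound C \<beta> cv n h \<delta> (card Cv))"
proof -
  define PX where "PX = distr Q borel fst"
  interpret PX: prob_space PX
    unfolding PX_def by (rule prob_space_distr) simp
  have design_AE: "AE x in PX. x \<in> Y"
    using PX.AE_prob_1 design Y unfolding PX_def by simp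
  then have design_Q: "AE z in Q. fst z \<in> Y"
    using AE_distrD[of fst Q borel "\<lambda>x. x \<in> Y"] unfolding PX_def by simp
  have bounded: "\<forall>y\<in>Y. \<bar>g y\<bar> \<le> C"
    and hoelder: "\<forall>y\<in>Y. \<forall>z\<in>Y. \<bar>g y - g z\<bar> \<le> C * dist y z powr \<beta>"
    using g by (auto simp: hoelder_class_def)
  obtain T where T: "T \<in> sets borel"
    "\<And>x. x \<in> Y \<Longrightarrow> measure PX (ball x h) < 2 * \<delta> \<Longrightarrow> x \<in> T" "measure PX T \<le> 2 * \<delta> * card Cv"
    using light_ball_region[OF _ _ cover, of PX "2 * \<delta>"] \<delta> PX.finite_measure_axioms
    by (auto simp: PX_def)
  note pointwise = nn_integral_g_hat_error_le_indicator[OF n h \<delta> \<beta> C _ design_Q bounded hoelder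
      T(2)[unfolded PX_def]]
  define a where "a = 2 * (C * h powr \<beta>)\<^sup>2 + 2 * cv / (real n * \<delta>\<^sup>2) + 2 * C\<^sup>2 / (real n * \<delta>)"
  have "risk n h \<delta> Q g \<le> (\<integral>\<^sup>+x. ennreal (a + C\<^sup>2 * indicator T x) \<partial>PX)"
    unfolding risk_def PX_def[symmetric] a_def using design_AE
    by (intro nn_integral_mono_AE) (auto elim: AE_mp intro: pointwise)
  also have "\<dots> = ennreal (a + C\<^sup>2 * measure PX T)"
  proof -
    have T_PX: "T \<in> sets PX"
      using T(1) by (simp add: PX_def)
    then have "integrable PX (indicator T :: 'a \<Rightarrow> real)"
      by (intro PX.integrable_const_bound[where B=1]) auto
    moreover have "0 \<le> a"
      using variance_bound_nonneg n \<delta> by (simp add: a_def)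
    ultimately show ?thesis
      using T_PX by (subst nn_integral_eq_integral) (auto simp: PX.prob_space)
  qed
  also have "\<dots> \<le> ennreal (a + C\<^sup>2 * (2 * \<delta> * card Cv))"
    using T(3) by (intro ennreal_leI add_left_mono mult_left_mono) auto
  finally show ?thesis
    by (simp add: a_def risk_bound_def ac_simps)
qed

lemma SUP_risk_le:
  assumes n: "n > 0" and h: "h > 0" and \<delta>: "\<delta> > 0" and \<beta>: "0 \<le> \<beta>" and C: "0 \<le> C"
    and Y: "Y \<in> sets borel" and design: "measure (distr Q borel fst) Y = 1"
    and entropy: "covering_number (h / 2) Y \<noteq> \<infinity>"
      "ln (real (the_enat (covering_number (h / 2) Y))) \<le> B"
  shows "(SUP g\<in>hoelder_class Y \<beta> C. risk n h \<delta> Q g) \<le> ennreal (risk_bound C \<beta> cv n h \<delta> (exp B))"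
proof (rule SUP_least)
  obtain Cv where cover: "finite Cv" "Y \<subseteq> (\<Union>c\<in>Cv. ball c (h / 2))" and card: "real (card Cv) \<le> exp B"
    using entropy by (rule finite_cover_card_le_exp)
  have "risk_bound C \<beta> cv n h \<delta> (card Cv) \<le> risk_bound C \<beta> cv n h \<delta> (exp B)"
    using card \<delta> by (auto simp: risk_bound_def intro!: mult_left_mono)
  then show "risk n h \<delta> Q g \<le> ennreal (risk_bound C \<beta> cv n h \<delta> (exp B))"
    if "g \<in> hoelder_class Y \<beta> C" for g
    using risk_le[OF n h \<delta> \<beta> C Y design that cover] by (elim order_trans) (rule ennreal_leI)
qed

lemma SUP_risk_le_bandwidth:
  fixes c d \<gamma> s0 :: real
  assumes n: "2 \<le> n" and d: "0 < d" and \<gamma>: "0 < \<gamma>" and \<delta>: "\<delta> > 0" and \<beta>: "0 \<le> \<beta>" and C: "0 \<le> C"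
    and Y: "Y \<in> sets borel" and design: "measure (distr Q borel fst) Y = 1"
    and entropy: "\<forall>s\<in>{0<..<s0}. covering_number s Y \<noteq> \<infinity>
      \<and> ln (real (the_enat (covering_number s Y))) \<le> c * s powr (-\<gamma>)"
    and small: "(d * ln (real n)) powr (-1/\<gamma>) < 2 * s0"
  defines "h \<equiv> (d * ln (real n)) powr (-1/\<gamma>)"
  shows "(SUP g\<in>hoelder_class Y \<beta> C. risk n h \<delta> Q g)
    \<le> ennreal (risk_bound C \<beta> cv n h \<delta> (real n powr (c * 2 powr \<gamma> * d)))"
proof -
  have n: "1 < real n" "0 < n" and h: "0 < h" "h / 2 \<in> {0<..<s0}"
    using n d small by (auto simp: h_def)
  from entropy h(2) have finite: "covering_number (h / 2) Y \<noteq> \<infinity>"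
    by auto
  from entropy h(2) have "ln (real (the_enat (covering_number (h / 2) Y))) \<le> c * (h / 2) powr (-\<gamma>)"
    by auto
  also have "(h / 2) powr (-\<gamma>) = 2 powr \<gamma> * d * ln (real n)"
    unfolding h_def half_bandwidth_powr_neg[OF d n(1) \<gamma>] by (simp add: mult.assoc)
  finally have "ln (real (the_enat (covering_number (h / 2) Y))) \<le> c * 2 powr \<gamma> * d * ln (real n)"
    by (simp add: mult.assoc)
  from SUP_risk_le[OF n(2) h(1) \<delta> \<beta> C Y design finite this]
  show ?thesis
    using n by (simp add: powr_def)
qed

end

lemma eventually_bandwidth_less:
  "0 < d \<Longrightarrow> 0 < \<gamma> \<Longrightarrow> 0 < s \<Longrightarrow> \<forall>\<^sub>F n in sequentially. (d * ln (real n)) powr (-1/\<gamma>) < s"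
  by real_asymp

lemma eventually_powr_le_ln_powr:
  "a < 0 \<Longrightarrow> b < 0 \<Longrightarrow> \<forall>\<^sub>F n in sequentially. real n powr a \<le> ln (real n) powr b"
  by real_asymp

lemma risk_bound_rate:
  fixes C cv d \<beta> \<gamma> \<eta> e :: real
  assumes \<gamma>: "0 < \<gamma>" and \<beta>: "0 < \<beta>" and \<eta>: "\<eta> < 1/2" and e: "e < \<eta>" and d: "0 < d"
    and cv: "0 \<le> cv"
  shows "\<exists>M. \<forall>\<^sub>F n in sequentially.
    risk_bound C \<beta> cv n ((d * ln (real n)) powr (-1/\<gamma>)) (real n powr (-\<eta>)) (real n powr e)
      \<le> M * ln (real n) powr (-2 * \<beta> / \<gamma>)"
proof
  define L where "L n = ln (real n) powr (-2 * \<beta> / \<gamma>)" for n :: nat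
  have rate: "-2 * \<beta> / \<gamma> < 0" using \<beta> \<gamma> by (simp add: divide_neg_pos)
  have "\<forall>\<^sub>F n in sequentially. 2 \<le> n \<and> real n powr (2 * \<eta> - 1) \<le> L n
      \<and> real n powr (\<eta> - 1) \<le> L n \<and> real n powr (e - \<eta>) \<le> L n"
    unfolding L_def using \<eta> e rate
    by (intro eventually_conj eventually_ge_at_top eventually_powr_le_ln_powr) auto
  then show "\<forall>\<^sub>F n in sequentially.
    risk_bound C \<beta> cv n ((d * ln (real n)) powr (-1/\<gamma>)) (real n powr (-\<eta>)) (real n powr e)
      \<le> (2 * C\<^sup>2 * d powr (-2 * \<beta> / \<gamma>) + 2 * cv + 4 * C\<^sup>2) * L n"
  proof eventually_elim
    case (elim n)
    then have n: "1 < real n" by simp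
    have "(((d * ln (real n)) powr (-1/\<gamma>)) powr \<beta>)\<^sup>2 = (d * ln (real n)) powr (-2 * \<beta> / \<gamma>)"
      by (simp add: powr_powr power2_eq_square powr_add[symmetric] field_simps)
    also have "\<dots> = d powr (-2 * \<beta> / \<gamma>) * L n"
      using d n by (simp add: powr_mult L_def)
    finally have bias: "(C * ((d * ln (real n)) powr (-1/\<gamma>)) powr \<beta>)\<^sup>2 = C\<^sup>2 * d powr (-2 * \<beta> / \<gamma>) * L n"
      by (simp add: power_mult_distrib)
    have noise: "cv / (real n * (real n powr (-\<eta>))\<^sup>2) \<le> cv * L n"
    proof -
      have "1 / (real n * (real n powr (-\<eta>))\<^sup>2) = real n powr (2 * \<eta> - 1)"
        using n by (simp add: power2_eq_square powr_diff powr_minus field_simps flip: powr_add)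
      with elim cv show ?thesis by (simp add: mult_left_mono divide_inverse flip: inverse_eq_divide)
    qed
    have empty: "C\<^sup>2 / (real n * real n powr (-\<eta>)) \<le> C\<^sup>2 * L n"
    proof -
      have "1 / (real n * real n powr (-\<eta>)) = real n powr (\<eta> - 1)"
        using n by (simp add: powr_minus powr_diff field_simps)
      with elim show ?thesis by (simp add: mult_left_mono divide_inverse flip: inverse_eq_divide)
    qed
    have light: "C\<^sup>2 * real n powr (-\<eta>) * real n powr e \<le> C\<^sup>2 * L n"
      using elim by (simp add: mult.assoc mult_left_mono flip: powr_add)
    have "risk_bound C \<beta> cv n ((d * ln (real n)) powr (-1/\<gamma>)) (real n powr (-\<eta>)) (real n powr e)
        = 2 * (C * ((d * ln (real n)) powr (-1/\<gamma>)) powr \<beta>)\<^sup>2 + 2 * (cv / (real n * (real n powr (-\<eta>))\<^sup>2))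
          + 2 * (C\<^sup>2 / (real n * real n powr (-\<eta>))) + 2 * (C\<^sup>2 * real n powr (-\<eta>) * real n powr e)"
      by (simp add: risk_bound_def)
    also have "\<dots> \<le> 2 * (C\<^sup>2 * d powr (-2 * \<beta> / \<gamma>) * L n) + 2 * (cv * L n) + 2 * (C\<^sup>2 * L n)
          + 2 * (C\<^sup>2 * L n)"
      using bias noise empty light by linarith
    also have "\<dots> = (2 * C\<^sup>2 * d powr (-2 * \<beta> / \<gamma>) + 2 * cv + 4 * C\<^sup>2) * L n"
      by (simp add: algebra_simps)
    finally show ?case .
  qed
qed

lemma covering_exponent_less:
  fixes c d \<gamma> \<eta> :: real
  assumes c: "0 < c" and \<gamma>: "0 < \<gamma>" and \<eta>: "0 < \<eta>" and d: "d < \<eta> * inverse c * 4 powr (-\<gamma>)"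
  shows "c * 2 powr \<gamma> * d < \<eta>"
proof -
  have "2 powr \<gamma> \<le> 4 powr \<gamma>"
    using \<gamma> by (intro powr_mono2) auto
  then have "2 powr \<gamma> * 4 powr (-\<gamma>) \<le> 1"
    by (simp add: powr_minus divide_le_eq flip: divide_inverse)
  have "c * 2 powr \<gamma> * d < c * 2 powr \<gamma> * (\<eta> * inverse c * 4 powr (-\<gamma>))"
    using d c by (intro mult_strict_left_mono) auto
  also have "\<dots> = \<eta> * (2 powr \<gamma> * 4 powr (-\<gamma>))"
    using c by (simp add: field_simps)
  also have "\<dots> \<le> \<eta>"
    using \<open>2 powr \<gamma> * 4 powr (-\<gamma>) \<le> 1\<close> \<eta> by (simp add: mult_left_le)
  finally show ?thesis .
qed

theorem theorem1:
  fixes Y :: "'a::polish_space set"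
    and s0 c0 c1 \<gamma> C \<beta> cv \<eta> d :: real
    and Q :: "nat \<Rightarrow> ('a \<times> real) measure"
  assumes Y_borel: "Y \<in> sets borel"
    and s0: "s0 > 0" and c0: "0 < c0" and c01: "c0 < c1" and \<gamma>: "\<gamma> > 0"
    and entropy: "\<forall>s\<in>{0<..<s0}. covering_number s Y \<noteq> \<infinity> \<and>
        c0 * s powr (-\<gamma>) \<le> ln (real (the_enat (covering_number s Y))) \<and>
        ln (real (the_enat (covering_number s Y))) \<le> c1 * s powr (-\<gamma>)"
    and C: "C > 0" and \<beta>: "0 < \<beta>" "\<beta> \<le> 1"
    and \<eta>: "0 < \<eta>" "\<eta> < 1/2"
    and d: "0 < d" "d < \<eta> * inverse c1 * 4 powr (-\<gamma>)"
    and Q_prob: "\<And>n. prob_space (Q n)"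
    and Q_sets: "\<And>n. sets (Q n) = sets borel"
    and design: "\<And>n. measure (distr (Q n) borel fst) Y = 1"
    and noise_sq_int: "\<And>n. integrable (Q n) (\<lambda>z. (snd z)\<^sup>2)"
    and noise_mean: "\<And>n. AE z in Q n.
        real_cond_exp (Q n) (vimage_algebra (space (Q n)) fst borel) snd z = 0"
    and noise_var: "\<And>n. AE z in Q n.
        real_cond_exp (Q n) (vimage_algebra (space (Q n)) fst borel) (\<lambda>z. (snd z)\<^sup>2) z
          - (real_cond_exp (Q n) (vimage_algebra (space (Q n)) fst borel) snd z)\<^sup>2 \<le> cv"
  shows "\<exists>M. \<forall>\<^sub>F n in sequentially.
     (SUP g\<in>hoelder_class Y \<beta> C.
        risk n ((d * ln (real n)) powr (-1/\<gamma>)) (real n powr (-\<eta>)) (Q n) g)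
       \<le> ennreal (M * ln (real n) powr (-2 * \<beta> / \<gamma>))"
proof -
  have noise: "regression_noise (Q n) cv" for n
    using Q_prob Q_sets noise_sq_int noise_mean noise_var
    by (simp add: regression_noise_def regression_noise_axioms_def)
  have c1: "0 < c1" using c0 c01 by linarith
  define e where "e = c1 * 2 powr \<gamma> * d"
  have "e < \<eta>"
    unfolding e_def using covering_exponent_less[OF c1 \<gamma> \<eta>(1) d(2)] .
  from risk_bound_rate[OF \<gamma> \<beta>(1) \<eta>(2) this d(1) regression_noise.variance_bound_nonneg[OF noise]]
  obtain M where "\<forall>\<^sub>F n in sequentially. risk_bound C \<beta> cv n ((d * ln (real n)) powr (-1/\<gamma>))
      (real n powr (-\<eta>)) (real n powr e) \<le> M * ln (real n) powr (-2 * \<beta> / \<gamma>)"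
    by blast
  moreover have "\<forall>\<^sub>F n in sequentially. 2 \<le> n \<and> (d * ln (real n)) powr (-1/\<gamma>) < 2 * s0"
    using s0 by (intro eventually_conj eventually_ge_at_top eventually_bandwidth_less d \<gamma>) simp
  ultimately have "\<forall>\<^sub>F n in sequentially. (SUP g\<in>hoelder_class Y \<beta> C.
      risk n ((d * ln (real n)) powr (-1/\<gamma>)) (real n powr (-\<eta>)) (Q n) g)
    \<le> ennreal (M * ln (real n) powr (-2 * \<beta> / \<gamma>))"
  proof eventually_elim
    case (elim n)
    have "(SUP g\<in>hoelder_class Y \<beta> C. risk n ((d * ln (real n)) powr (-1/\<gamma>)) (real n powr (-\<eta>)) (Q n) g)
      \<le> ennreal (risk_bound C \<beta> cv n ((d * ln (real n)) powr (-1/\<gamma>)) (real n powr (-\<eta>)) (real n powr e))"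
      unfolding e_def using elim(2) entropy \<beta>(1) C
      by (intro regression_noise.SUP_risk_le_bandwidth[OF noise _ d(1) \<gamma> _ _ _ Y_borel design]) auto
    also have "\<dots> \<le> ennreal (M * ln (real n) powr (-2 * \<beta> / \<gamma>))"
      using elim(1) by (rule ennreal_leI)
    finally show ?case .
  qed
  then show ?thesis ..
qed

end
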